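(* Let $G$ be a flag with vertices $v_1,\dots,v_n$ ordered by increasing $x$-coordinate. Let $V^+=\{v_i: v_i \text{ is above } v_1v_2\}$ and $V^-=\{v_i: v_i \text{ is below } v_1v_2\}$. Then for $v_{i_1},v_{i_2}\in V^+$ with $i_1<i_2$ we have $v_1v_{i_1}\prec v_1v_{i_2}$, and for $v_{i_1},v_{i_2}\in V^-$ with $i_1<i_2$ we have $v_1v_{i_2}\prec v_1v_{i_1}$.
   Context: Let $\mathcal C=S^1\times\mathbb R$ ($S^1=[0,1]$ with $0\sim1$), points $p=(p_x,p_y)$ with $0\le p_x<1$. A flag is a graph drawn on $\mathcal C$ (vertices distinct points, edges Jordan arcs, no overlapping edges, no edge through a vertex) that is complete, simple (any two edges meet in at most one point: a common endpoint or a proper crossing), monotone (every edge meets each vertical line $l_{x=a}=\{p:p_x=a\}$ at most once, no two vertices share an $x$-coordinate, no vertex has $x$-coordinate $0$), and such that $l_{x=0}$ meets every edge in its relative interior. A point $v$ is related to an $x$-monotone curve $e$ if $l_{x=v_x}$ meets $e$ in its relative interior; then $v$ is below (above) $e$ if $v_y$ is smaller (larger) than the $y$-coordinate of $l_{x=v_x}\cap e$. Two $x$-monotone curves $e,f$ are related if they do not cross, some vertical line meets both relative interiors, and all such lines meet them in the same vertical order; then $e\prec f$ means that on every vertical line meeting both relative interiors, $e$'s point has $y$-coordinate at most that of $f$'s point. *)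

theory Defs
  imports "HOL-Analysis.Analysis"
begin

text \<open>Points of the cylinder C = S^1 x R are pairs (x,y) of reals with 0 <= x < 1.
  The cylinder topology is obtained from the embedding (x,y) |-> (cis (2 pi x), y).\<close>

type_synonym pt = "real \<times> real"

definition Cyl :: "pt set" where
  "Cyl = {p. 0 \<le> fst p \<and> fst p < 1}"

definition cyl_emb :: "pt \<Rightarrow> complex \<times> real" where
  "cyl_emb p = (cis (2 * pi * fst p), snd p)"

definition jordan_arc :: "pt set \<Rightarrow> pt \<Rightarrow> pt \<Rightarrow> bool" where
  "jordan_arc e u v \<longleftrightarrow> (\<exists>\<gamma> :: real \<Rightarrow> pt.
     \<gamma> ` {0..1} \<subseteq> Cyl \<and> continuous_on {0..1} (cyl_emb \<circ> \<gamma>) \<and> inj_on \<gamma> {0..1} \<and>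
     \<gamma> ` {0..1} = e \<and> \<gamma> 0 = u \<and> \<gamma> 1 = v)"

text \<open>Curves below are given by their relative interiors R (sets of points).
  The vertical line at x = a meets R iff a is in xproj R; yval R a is the y-coordinate
  of that (unique, for x-monotone curves) intersection point.\<close>

definition xproj :: "pt set \<Rightarrow> real set" where
  "xproj R = {a. \<exists>y. (a, y) \<in> R}"

definition yval :: "pt set \<Rightarrow> real \<Rightarrow> real" where
  "yval R a = (THE y. (a, y) \<in> R)"

text \<open>Proper crossing of two x-monotone curves at a common point p: on one side of the
  vertical line through p (locally, on the circle S^1) one curve is strictly below the other,
  on the other side strictly above.\<close>
definition crosses_at :: "pt set \<Rightarrow> pt set \<Rightarrow> pt \<Rightarrow> bool" where
  "crosses_at R S p \<longleftrightarrow> p \<in> R \<and> p \<in> S \<and> (\<exists>\<delta>>0.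
     (\<forall>t. 0 < t \<and> t < \<delta> \<longrightarrow>
        frac (fst p - t) \<in> xproj R \<inter> xproj S \<and> frac (fst p + t) \<in> xproj R \<inter> xproj S) \<and>
     ((\<forall>t. 0 < t \<and> t < \<delta> \<longrightarrow> yval R (frac (fst p - t)) < yval S (frac (fst p - t)) \<and>
                                 yval R (frac (fst p + t)) > yval S (frac (fst p + t))) \<or>
      (\<forall>t. 0 < t \<and> t < \<delta> \<longrightarrow> yval R (frac (fst p - t)) > yval S (frac (fst p - t)) \<and>
                                 yval R (frac (fst p + t)) < yval S (frac (fst p + t)))))"

definition crosses :: "pt set \<Rightarrow> pt set \<Rightarrow> bool" where
  "crosses R S \<longleftrightarrow> (\<exists>p. crosses_at R S p)"

definition curves_related :: "pt set \<Rightarrow> pt set \<Rightarrow> bool" where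
  "curves_related R S \<longleftrightarrow> \<not> crosses R S \<and> xproj R \<inter> xproj S \<noteq> {} \<and>
     ((\<forall>a \<in> xproj R \<inter> xproj S. yval R a \<le> yval S a) \<or>
      (\<forall>a \<in> xproj R \<inter> xproj S. yval S a \<le> yval R a))"

definition curve_prec :: "pt set \<Rightarrow> pt set \<Rightarrow> bool" where
  "curve_prec R S \<longleftrightarrow> curves_related R S \<and> (\<forall>a \<in> xproj R \<inter> xproj S. yval R a \<le> yval S a)"

definition pt_above :: "pt \<Rightarrow> pt set \<Rightarrow> bool" where
  "pt_above v R \<longleftrightarrow> fst v \<in> xproj R \<and> snd v > yval R (fst v)"

definition pt_below :: "pt \<Rightarrow> pt set \<Rightarrow> bool" where
  "pt_below v R \<longleftrightarrow> fst v \<in> xproj R \<and> snd v < yval R (fst v)"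

definition edge_ri :: "(pt \<Rightarrow> pt \<Rightarrow> pt set) \<Rightarrow> pt \<Rightarrow> pt \<Rightarrow> pt set" where
  "edge_ri E u v = E u v - {u, v}"

text \<open>A flag: complete simple monotone drawing on the cylinder of the complete graph on V,
  with edge uv drawn as the set E u v, and every edge crossing the line x = 0.\<close>
definition flag :: "pt set \<Rightarrow> (pt \<Rightarrow> pt \<Rightarrow> pt set) \<Rightarrow> bool" where
  "flag V E \<longleftrightarrow>
     finite V \<and> V \<subseteq> Cyl \<and>
     (\<forall>v\<in>V. fst v \<noteq> 0) \<and> inj_on fst V \<and>
     (\<forall>u\<in>V. \<forall>v\<in>V. u \<noteq> v \<longrightarrow> E u v = E v u \<and> jordan_arc (E u v) u v) \<and>
     (\<forall>u\<in>V. \<forall>v\<in>V. \<forall>w\<in>V. u \<noteq> v \<and> w \<noteq> u \<and> w \<noteq> v \<longrightarrow> w \<notin> E u v) \<and>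
     (\<forall>u\<in>V. \<forall>v\<in>V. \<forall>w\<in>V. \<forall>z\<in>V. u \<noteq> v \<and> w \<noteq> z \<and> {u, v} \<noteq> {w, z} \<longrightarrow>
        E u v \<inter> E w z = {} \<or>
        (\<exists>p. E u v \<inter> E w z = {p} \<and>
             (p \<in> {u, v} \<inter> {w, z} \<or> crosses_at (edge_ri E u v) (edge_ri E w z) p))) \<and>
     (\<forall>u\<in>V. \<forall>v\<in>V. u \<noteq> v \<longrightarrow> (\<forall>a y y'. (a, y) \<in> E u v \<longrightarrow> (a, y') \<in> E u v \<longrightarrow> y = y')) \<and>
     (\<forall>u\<in>V. \<forall>v\<in>V. u \<noteq> v \<longrightarrow> (\<exists>y. (0, y) \<in> edge_ri E u v))"

end

theory Submission
  imports Defs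
begin

text \<open>An edge uw with x_u < x_w is x-monotone and meets the line x = 0, so it is the graph,
  over x = frac t, of a continuous function (edge_lift E u w) of t in [x_w - 1, x_u]: a lift of
  the edge to the universal cover of the circle. Let a = v_1 be the leftmost vertex, b = v_2, and
  let c, d be vertices right of b, both above ab. If ac were above ad somewhere, then, since ac
  and ad share only a, the vertex d would lie below ac; following bc and then cd with the
  intermediate value theorem, cd would have to meet ab twice, once for t in (x_d - 1, x_a) and
  once for x in (x_b, x_c), contradicting simplicity of the drawing. Multiplying all heights by
  -1 turns the case below ab into the case above ab.\<close>

lemma frac_eq_cases:
  fixes t x :: real
  assumes "frac t = x" "x - 2 < t" "t < x + 1"
  shows "t = x \<or> t = x - 1"
proof -
  obtain k :: int where k: "t - x = of_int k"
    using assms(1) by (auto simp: frac_unique_iff elim!: Ints_cases)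
  with assms(2,3) have "k = 0 \<or> k = -1" by linarith
  with k show ?thesis by auto
qed

lemma frac_image_shifted_interval:
  fixes a b :: real
  assumes "0 < b" "b < a" "a < 1"
  shows "frac ` {a - 1<..<b} = {0..<b} \<union> {a<..<1}"
proof (intro equalityI subsetI)
  fix x assume "x \<in> frac ` {a - 1<..<b}"
  then obtain t where t: "t \<in> {a - 1<..<b}" "x = frac t" by auto
  show "x \<in> {0..<b} \<union> {a<..<1}"
  proof (cases "t < 0")
    case True
    then have "frac t = t + 1" using t assms by (simp add: frac_unique_iff)
    then show ?thesis using t True by auto
  next
    case False
    then have "frac t = t" using t assms by (simp add: frac_eq)
    then show ?thesis using t False by auto
  qed
next
  fix x assume x: "x \<in> {0..<b} \<union> {a<..<1}"
  show "x \<in> frac ` {a - 1<..<b}"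
  proof (cases "x < b")
    case True
    then have "frac x = x" "x \<in> {a - 1<..<b}" using x assms by (auto simp: frac_eq)
    then show ?thesis by (metis image_eqI)
  next
    case False
    then have "frac (x - 1) = x" "x - 1 \<in> {a - 1<..<b}" using x assms by (auto simp: frac_unique_iff)
    then show ?thesis by (metis image_eqI)
  qed
qed

lemma continuous_frac_lift:
  fixes g :: "'a::real_normed_vector \<Rightarrow> real"
  assumes "continuous_on S (\<lambda>s. cis (2 * pi * g s))" "contractible S"
    and g: "\<And>s. s \<in> S \<Longrightarrow> 0 \<le> g s \<and> g s < 1" and s0: "s0 \<in> S" "frac x0 = g s0"
  shows "\<exists>L. continuous_on S L \<and> L s0 = x0 \<and> (\<forall>s\<in>S. frac (L s) = g s)"
proof -
  obtain h where h: "continuous_on S h" "\<And>s. s \<in> S \<Longrightarrow> cis (2 * pi * g s) = exp (h s)"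
    using continuous_logarithm_on_contractible[OF assms(1,2)] by (metis cis_neq_zero)
  define \<theta> where "\<theta> s = Im (h s) / (2 * pi)" for s
  have \<theta>_int: "\<theta> s - g s \<in> \<int>" if s: "s \<in> S" for s
  proof -
    have "exp (h s) = exp (\<i> * of_real (2 * pi * g s))"
      using h(2)[OF s] by (simp add: cis_conv_exp)
    then obtain k :: int where "h s = \<i> * of_real (2 * pi * g s) + (of_int (2 * k) * pi) * \<i>"
      using exp_eq by blast
    then have "\<theta> s - g s = of_int k" unfolding \<theta>_def by (simp add: field_simps)
    then show ?thesis by simp
  qed
  define L where "L s = \<theta> s - \<theta> s0 + x0" for s
  have "continuous_on S L" unfolding L_def \<theta>_def by (intro continuous_intros h(1)) auto
  moreover have "frac (L s) = g s" if s: "s \<in> S" for s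
  proof -
    have "x0 - g s0 \<in> \<int>" using s0(2) by (simp add: frac_unique_iff)
    moreover have "L s - g s = (\<theta> s - g s) - (\<theta> s0 - g s0) + (x0 - g s0)" unfolding L_def by simp
    ultimately have "L s - g s \<in> \<int>" using \<theta>_int s s0(1) by (metis Ints_add Ints_diff)
    then show ?thesis using g[OF s] by (simp add: frac_unique_iff)
  qed
  moreover have "L s0 = x0" unfolding L_def by simp
  ultimately show ?thesis by blast
qed

lemma inj_frac_endpoint_dist_lt_1:
  fixes M :: "real \<Rightarrow> real"
  assumes cont: "continuous_on {0..1} M" and inj: "inj_on (\<lambda>s. frac (M s)) {0..1}"
  shows "\<bar>M 1 - M 0\<bar> < 1"
proof (rule ccontr)
  assume "\<not> ?thesis"
  then obtain s where s: "s \<in> {0..1}" "M s = M 0 + 1 \<or> M s = M 0 - 1"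
    using IVT'[OF _ _ _ cont, of "M 0 + 1"] IVT2'[OF _ _ _ cont, of "M 0 - 1"] by force
  then have "frac (M s) = frac (M 0)" by (metis diff_add_cancel frac_1_eq)
  then have "s = 0" using inj s(1) by (auto dest: inj_onD)
  then show False using s(2) by simp
qed

lemma continuous_inj_image_unit_interval:
  fixes M :: "real \<Rightarrow> real"
  assumes cont: "continuous_on {0..1} M" and inj: "inj_on M {0..1}" and "M 1 < M 0"
  shows "M ` {0..1} = {M 1..M 0}"
proof (intro equalityI subsetI)
  fix t assume "t \<in> M ` {0..1}"
  then obtain s where s: "s \<in> {0..1}" "t = M s" by auto
  show "t \<in> {M 1..M 0}"
  proof (cases "s = 0 \<or> s = 1")
    case False
    then show ?thesis using continuous_inj_imp_mono[OF _ _ cont inj, of s] s assms(3) by auto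
  qed (use s assms(3) in auto)
next
  fix t assume "t \<in> {M 1..M 0}"
  then show "t \<in> M ` {0..1}" using IVT2'[OF _ _ _ cont, of t] by force
qed

lemma continuous_inj_avoids_Ints:
  fixes M :: "real \<Rightarrow> real"
  assumes cont: "continuous_on {0..1} M" and inj: "inj_on M {0..1}"
    and ends: "M 0 \<in> {0<..<1}" "M 1 \<in> {0<..<1}" and s: "s \<in> {0..1}"
  shows "M s \<notin> \<int>"
proof (cases "s = 0 \<or> s = 1")
  case False
  then have "M s \<in> {0<..<1}" using continuous_inj_imp_mono[OF _ _ cont inj, of s] s ends by auto
  then show ?thesis by (auto elim!: Ints_cases)
qed (use ends in \<open>auto elim!: Ints_cases\<close>)

lemma graph_of_frac_reparametrization:
  fixes \<gamma> :: "real \<Rightarrow> real \<times> real" and M :: "real \<Rightarrow> real"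
  assumes "continuous_on {0..1} M" "inj_on M {0..1}" "continuous_on {0..1} (\<lambda>s. snd (\<gamma> s))"
    and "\<And>s. s \<in> {0..1} \<Longrightarrow> fst (\<gamma> s) = frac (M s)"
  shows "\<exists>Y. continuous_on (M ` {0..1}) Y \<and> \<gamma> ` {0..1} = (\<lambda>t. (frac t, Y t)) ` M ` {0..1}"
proof -
  define Y where "Y t = snd (\<gamma> (inv_into {0..1} M t))" for t
  have "continuous_on (M ` {0..1}) (inv_into {0..1} M)"
    by (rule continuous_on_inv[OF assms(1)]) (use assms(2) in auto)
  then have "continuous_on (M ` {0..1}) Y"
    unfolding Y_def by (rule continuous_on_compose2[OF assms(3)]) (auto intro: inv_into_into)
  moreover have "\<gamma> s = (frac (M s), Y (M s))" if "s \<in> {0..1}" for s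
    using assms(2,4) that by (simp add: Y_def prod_eq_iff)
  then have "\<gamma> ` {0..1} = (\<lambda>t. (frac t, Y t)) ` M ` {0..1}"
    by (auto simp: image_image intro!: image_cong)
  ultimately show ?thesis by blast
qed

lemma frac_inj: "frac (s::real) = frac t \<Longrightarrow> \<bar>s - t\<bar> < 1 \<Longrightarrow> s = t"
proof (erule frac_eqE)
  fix k :: int assume "s = t + of_int k" "\<bar>s - t\<bar> < 1"
  then have "k = 0" by linarith
  with \<open>s = t + of_int k\<close> show "s = t" by simp
qed

lemma continuous_sign_persists:
  fixes h :: "real \<Rightarrow> real"
  assumes cont: "continuous_on {p..q} h" and s: "s \<in> {p..q}" "h s > 0"
    and no_zero: "\<forall>t\<in>{p<..<q}. h t \<noteq> 0" and t: "t \<in> {p..q}"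
  shows "h t \<ge> 0"
proof (rule ccontr)
  assume "\<not> h t \<ge> 0"
  then have ht: "h t < 0" by simp
  have "\<exists>z \<in> {min s t..max s t}. h z = 0"
  proof (cases "t \<le> s")
    case True
    then show ?thesis
      using IVT'[of h t 0 s] ht s t continuous_on_subset[OF cont, of "{t..s}"] by auto
  next
    case False
    then show ?thesis
      using IVT2'[of h t 0 s] ht s t continuous_on_subset[OF cont, of "{s..t}"] by auto
  qed
  then obtain z where "z \<in> {min s t..max s t}" "h z = 0" by blast
  moreover have "z \<noteq> s" "z \<noteq> t" using calculation \<open>h t < 0\<close> s by auto
  ultimately have "z \<in> {p<..<q}" using s(1) t by (auto simp: min_def max_def split: if_splits)
  then show False using no_zero \<open>h z = 0\<close> by blast
qed

lemma IVT_open_zero: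
  fixes h :: "real \<Rightarrow> real"
  assumes "continuous_on {p..q} h" "p \<le> q" "h p > 0" "h q < 0"
  shows "\<exists>t\<in>{p<..<q}. h t = 0"
proof -
  obtain z where z: "p \<le> z" "z \<le> q" "h z = 0" using IVT2'[of h q 0 p] assms by auto
  then have "z \<noteq> p" "z \<noteq> q" using assms by auto
  with z show ?thesis by auto
qed

text \<open>Yb, Yc, Yd, Ybc, Ycd play the roles of the lifts of the edges ab, ac, ad, bc, cd.\<close>
lemma lifted_quadrilateral_order:
  fixes Yb Yc Yd Ybc Ycd :: "real \<Rightarrow> real"
  assumes x: "0 < xa" "xa < xb" "xb < xc" "xc < xd" "xd < 1"
    and cb: "continuous_on {xb-1..xa} Yb" "Yb xa = ya" "Yb (xb-1) = yb"
    and cc: "continuous_on {xc-1..xa} Yc" "Yc xa = ya" "Yc (xc-1) = yc"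
    and cd: "continuous_on {xd-1..xa} Yd" "Yd xa = ya" "Yd (xd-1) = yd"
    and cbc: "continuous_on {xc-1..xb} Ybc" "Ybc (xc-1) = yc" "Ybc xb = yb"
    and ccd: "continuous_on {xd-1..xc} Ycd" "Ycd (xd-1) = yd" "Ycd xc = yc"
    and c_above: "Yb (xc-1) < yc" and d_above: "Yb (xd-1) < yd"
    and ab_ac: "\<forall>t\<in>{xc-1<..<xa}. Yb t \<noteq> Yc t"
    and ac_ad: "\<forall>t\<in>{xd-1<..<xa}. Yc t \<noteq> Yd t"
    and bc_ab: "\<forall>t\<in>{xc-1<..<xa}. Ybc t \<noteq> Yb t"
    and bc_ac: "\<forall>t\<in>{xc-1<..<xa}. Ybc t \<noteq> Yc t"
    and cd_bc: "\<forall>t\<in>{xd-1<..<xb}. Ycd t \<noteq> Ybc t"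
    and cd_ac: "\<forall>t\<in>{xd-1<..<xa}. Ycd t \<noteq> Yc t"
    and d_off_ac: "Yc (xd-1) \<noteq> yd" and a_off_bc: "Ybc xa \<noteq> ya"
    and b_off_cd: "Ycd xb \<noteq> yb" and a_off_cd: "Ycd xa \<noteq> ya"
    and ab_cd: "\<not> (\<exists>t1\<in>{xd-1<..<xa}. \<exists>t2\<in>{xb<..<xc}. Ycd t1 = Yb t1 \<and> Ycd t2 = Yb (t2-1))"
  shows "\<forall>t\<in>{xd-1<..<xa}. Yc t \<le> Yd t"
proof (rule ccontr)
  assume "\<not> ?thesis"
  then obtain t0 where t0: "t0 \<in> {xd-1<..<xa}" "Yc t0 > Yd t0" by force
  have Yb_ad: "continuous_on {xd-1..xa} Yb" and Yb_ac: "continuous_on {xc-1..xa} Yb"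
    using continuous_on_subset[OF cb(1)] x by auto
  have Yc_ad: "continuous_on {xd-1..xa} Yc"
    using continuous_on_subset[OF cc(1)] x by auto
  have Ybc_ac: "continuous_on {xc-1..xa} Ybc" and Ybc_bd: "continuous_on {xd-1..xb} Ybc"
    using continuous_on_subset[OF cbc(1)] x by auto
  have Ycd_bd: "continuous_on {xd-1..xb} Ycd" and Ycd_ad: "continuous_on {xd-1..xa} Ycd"
    and Ycd_bc: "continuous_on {xb..xc} Ycd"
    using continuous_on_subset[OF ccd(1)] x by auto
  have "(\<lambda>t. Yc t - Yd t) (xd-1) \<ge> 0"
    by (rule continuous_sign_persists[of "xd-1" xa _ t0])
      (use t0 ac_ad x in \<open>auto intro!: continuous_intros Yc_ad cd(1)\<close>)
  then have d_below_ac: "Yc (xd-1) > yd" using d_off_ac cd by auto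
  have bc_above_ab: "Ybc t - Yb t \<ge> 0" if "t \<in> {xc-1..xa}" for t
    by (rule continuous_sign_persists[of "xc-1" xa _ "xc-1"])
      (use that bc_ab x c_above cbc in \<open>auto intro!: continuous_intros Yb_ac Ybc_ac\<close>)
  have bc_above_ac: "Ybc (xd-1) > Yc (xd-1)"
  proof (rule ccontr)
    assume "\<not> ?thesis"
    moreover have "xd-1 \<in> {xc-1<..<xa}" using x by auto
    ultimately have "Ybc (xd-1) < Yc (xd-1)" using bc_ac by fastforce
    then have "(\<lambda>t. Yc t - Ybc t) xa \<ge> 0"
      by (intro continuous_sign_persists[of "xc-1" xa _ "xd-1"])
        (use bc_ac x in \<open>auto intro!: continuous_intros Ybc_ac cc(1)\<close>)
    moreover have "Ybc xa - Yb xa \<ge> 0" using bc_above_ab x by auto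
    ultimately show False using a_off_bc cb cc by auto
  qed
  have "(\<lambda>t. Ybc t - Ycd t) xb \<ge> 0"
    by (rule continuous_sign_persists[of "xd-1" xb _ "xd-1"])
      (use cd_bc x bc_above_ac d_below_ac ccd in \<open>auto intro!: continuous_intros Ybc_bd Ycd_bd\<close>)
  then have cd_below_b: "Ycd xb < yb" using b_off_cd cbc by auto
  have "(\<lambda>t. Yc t - Ycd t) xa \<ge> 0"
    by (rule continuous_sign_persists[of "xd-1" xa _ "xd-1"])
      (use cd_ac x d_below_ac ccd in \<open>auto intro!: continuous_intros Yc_ad Ycd_ad\<close>)
  then have cd_below_a: "Ycd xa < ya" using a_off_cd cc by auto
  have "continuous_on {xd-1..xa} (\<lambda>t. Ycd t - Yb t)" by (intro continuous_intros Yb_ad Ycd_ad)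
  then obtain t1 where t1: "t1 \<in> {xd-1<..<xa}" "Ycd t1 - Yb t1 = 0"
    using IVT_open_zero[of "xd-1" xa "\<lambda>t. Ycd t - Yb t"] x d_above ccd cb cd_below_a by auto
  have "continuous_on {xb..xc} (\<lambda>t. Yb (t-1))"
    by (rule continuous_on_compose2[OF cb(1), of _ "\<lambda>t. t - 1"]) (use x in \<open>auto intro!: continuous_intros\<close>)
  then have "continuous_on {xb..xc} (\<lambda>t. Yb (t-1) - Ycd t)" by (intro continuous_intros Ycd_bc)
  then obtain t2 where t2: "t2 \<in> {xb<..<xc}" "Yb (t2-1) - Ycd t2 = 0"
    using IVT_open_zero[of xb xc "\<lambda>t. Yb (t-1) - Ycd t"] x c_above ccd cb cd_below_b by auto
  have "Ycd t1 = Yb t1" "Ycd t2 = Yb (t2-1)" using t1(2) t2(2) by auto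
  with ab_cd t1(1) t2(1) show False by blast
qed

definition edge_lift :: "(pt \<Rightarrow> pt \<Rightarrow> pt set) \<Rightarrow> pt \<Rightarrow> pt \<Rightarrow> real \<Rightarrow> real" where
  "edge_lift E u w t = yval (E u w) (frac t)"

locale flag_drawing =
  fixes V :: "pt set" and E :: "pt \<Rightarrow> pt \<Rightarrow> pt set"
  assumes is_flag: "flag V E"
begin

lemma flag_parts:
  shows "V \<subseteq> Cyl" "\<forall>v\<in>V. fst v \<noteq> 0"
    "\<forall>u\<in>V. \<forall>w\<in>V. u \<noteq> w \<longrightarrow> E u w = E w u \<and> jordan_arc (E u w) u w"
    "\<forall>u\<in>V. \<forall>w\<in>V. \<forall>z\<in>V. u \<noteq> w \<and> z \<noteq> u \<and> z \<noteq> w \<longrightarrow> z \<notin> E u w"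
    "\<forall>u\<in>V. \<forall>w\<in>V. \<forall>u'\<in>V. \<forall>w'\<in>V. u \<noteq> w \<and> u' \<noteq> w' \<and> {u, w} \<noteq> {u', w'} \<longrightarrow>
       E u w \<inter> E u' w' = {} \<or> (\<exists>p. E u w \<inter> E u' w' = {p} \<and>
         (p \<in> {u, w} \<inter> {u', w'} \<or> crosses_at (edge_ri E u w) (edge_ri E u' w') p))"
    "\<forall>u\<in>V. \<forall>w\<in>V. u \<noteq> w \<longrightarrow> (\<forall>a y y'. (a, y) \<in> E u w \<longrightarrow> (a, y') \<in> E u w \<longrightarrow> y = y')"
    "\<forall>u\<in>V. \<forall>w\<in>V. u \<noteq> w \<longrightarrow> (\<exists>y. (0, y) \<in> edge_ri E u w)"
  by (insert is_flag, unfold flag_def, elim conjE; assumption)+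

lemma vertex_x_bounds: "v \<in> V \<Longrightarrow> 0 < fst v \<and> fst v < 1"
  using flag_parts(1,2) unfolding Cyl_def by force

lemma edge_sym: "u \<in> V \<Longrightarrow> w \<in> V \<Longrightarrow> u \<noteq> w \<Longrightarrow> E u w = E w u"
  using flag_parts(3) by blast

lemma edge_jordan_arc: "u \<in> V \<Longrightarrow> w \<in> V \<Longrightarrow> u \<noteq> w \<Longrightarrow> jordan_arc (E u w) u w"
  using flag_parts(3) by blast

lemma vertex_notin_edge:
  "u \<in> V \<Longrightarrow> w \<in> V \<Longrightarrow> z \<in> V \<Longrightarrow> u \<noteq> w \<Longrightarrow> z \<noteq> u \<Longrightarrow> z \<noteq> w \<Longrightarrow> z \<notin> E u w"
  using flag_parts(4) by blast

lemma edge_x_monotone: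
  "u \<in> V \<Longrightarrow> w \<in> V \<Longrightarrow> u \<noteq> w \<Longrightarrow> (a, y) \<in> E u w \<Longrightarrow> (a, y') \<in> E u w \<Longrightarrow> y = y'"
  using flag_parts(6) by blast

lemma edge_crosses_zero: "u \<in> V \<Longrightarrow> w \<in> V \<Longrightarrow> u \<noteq> w \<Longrightarrow> \<exists>y. (0, y) \<in> edge_ri E u w"
  using flag_parts(7) by blast

lemma edges_meet_at_most_once:
  assumes "u \<in> V" "w \<in> V" "u' \<in> V" "w' \<in> V" "u \<noteq> w" "u' \<noteq> w'" "{u, w} \<noteq> {u', w'}"
    and "p \<in> E u w \<inter> E u' w'" "q \<in> E u w \<inter> E u' w'"
  shows "p = q"
proof -
  have "E u w \<inter> E u' w' = {} \<or> (\<exists>r. E u w \<inter> E u' w' = {r})"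
    using flag_parts(5) assms(1-7) by meson
  then obtain r where "E u w \<inter> E u' w' \<subseteq> {r}" by blast
  then show ?thesis using assms(8,9) by blast
qed

lemma edge_endpoints:
  assumes "u \<in> V" "w \<in> V" "u \<noteq> w"
  shows "u \<in> E u w" "w \<in> E u w"
  using edge_jordan_arc[OF assms] unfolding jordan_arc_def by force+

lemma adjacent_edges_meet_at_common_vertex:
  assumes "u \<in> V" "w \<in> V" "w' \<in> V" "u \<noteq> w" "u \<noteq> w'" "w \<noteq> w'" "p \<in> E u w" "p \<in> E u w'"
  shows "p = u"
  using edges_meet_at_most_once[of u w u w' p u] edge_endpoints assms
  by (auto simp: doubleton_eq_iff)

lemma frac_vertex_x: "z \<in> V \<Longrightarrow> frac (fst z) = fst z"
  using vertex_x_bounds[of z] by (simp add: frac_eq)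

lemma frac_vertex_x_minus_1: "z \<in> V \<Longrightarrow> frac (fst z - 1) = fst z"
  using vertex_x_bounds[of z] by (simp add: frac_unique_iff)

lemma yval_edge:
  assumes "u \<in> V" "w \<in> V" "u \<noteq> w" "(a, y) \<in> E u w"
  shows "yval (E u w) a = y"
  unfolding yval_def using edge_x_monotone[OF assms(1-3) assms(4)] assms(4) by blast

lemma yval_edge_ri:
  assumes "u \<in> V" "w \<in> V" "u \<noteq> w" "a \<in> xproj (edge_ri E u w)"
  shows "yval (edge_ri E u w) a = yval (E u w) a"
proof -
  obtain y where y: "(a, y) \<in> edge_ri E u w" using assms(4) unfolding xproj_def by blast
  then have "(a, y) \<in> E u w" unfolding edge_ri_def by blast
  then have "\<And>y'. (a, y') \<in> edge_ri E u w \<Longrightarrow> y' = y"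
    using edge_x_monotone[OF assms(1-3)] unfolding edge_ri_def by blast
  then show ?thesis using y yval_edge[OF assms(1-3) \<open>(a, y) \<in> E u w\<close>] unfolding yval_def by blast
qed

lemma edge_param_inj_on_x:
  assumes "u \<in> V" "w \<in> V" "u \<noteq> w" "inj_on \<gamma> S" "\<gamma> ` S \<subseteq> E u w"
  shows "inj_on (\<lambda>s. fst (\<gamma> s)) S"
proof (rule inj_onI)
  fix s t assume st: "s \<in> S" "t \<in> S" "fst (\<gamma> s) = fst (\<gamma> t)"
  then have "snd (\<gamma> s) = snd (\<gamma> t)"
    using edge_x_monotone[OF assms(1-3), of "fst (\<gamma> s)"] assms(5) by (metis image_subset_iff prod.collapse)
  with st(3) have "\<gamma> s = \<gamma> t" by (simp add: prod_eq_iff)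
  then show "s = t" using inj_onD[OF assms(4)] st(1,2) by blast
qed

lemma edge_is_lifted_graph:
  assumes u: "u \<in> V" and w: "w \<in> V" and uw: "fst u < fst w"
  shows "\<exists>Y. continuous_on {fst w - 1..fst u} Y \<and> E u w = (\<lambda>t. (frac t, Y t)) ` {fst w - 1..fst u}"
proof -
  have neq: "u \<noteq> w" using uw by auto
  have xu: "0 < fst u" and xw: "fst w < 1" using vertex_x_bounds u w by auto
  obtain \<gamma> :: "real \<Rightarrow> pt" where \<gamma>: "\<gamma> ` {0..1} \<subseteq> Cyl" "continuous_on {0..1} (cyl_emb \<circ> \<gamma>)"
     "inj_on \<gamma> {0..1}" "\<gamma> ` {0..1} = E u w" "\<gamma> 0 = u" "\<gamma> 1 = w"
    using edge_jordan_arc[OF u w neq] unfolding jordan_arc_def by blast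
  have "continuous_on {0..1} (\<lambda>s. cis (2 * pi * fst (\<gamma> s)))"
    using continuous_on_fst[OF \<gamma>(2)] by (simp add: cyl_emb_def o_def)
  moreover have "contractible {0..1::real}" by (simp add: convex_imp_contractible)
  moreover have "0 \<le> fst (\<gamma> s) \<and> fst (\<gamma> s) < 1" if "s \<in> {0..1}" for s :: real
    using \<gamma>(1) that unfolding Cyl_def by (auto simp: image_subset_iff)
  moreover note frac_vertex_x[OF u]
  ultimately have "\<exists>M. continuous_on {0..1} M \<and> M 0 = fst u \<and> (\<forall>s\<in>{0..1}. frac (M s) = fst (\<gamma> s))"
    using \<gamma>(5) by (intro continuous_frac_lift) auto
  then obtain M where M: "continuous_on {0..1} M" and M0: "M 0 = fst u"
    and fracM: "\<And>s. s \<in> {0..1} \<Longrightarrow> frac (M s) = fst (\<gamma> s)"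
    by blast
  have "inj_on (\<lambda>s. fst (\<gamma> s)) {0..1}"
    using \<gamma>(3,4) by (intro edge_param_inj_on_x[OF u w neq]) auto
  moreover have "inj_on (\<lambda>s. frac (M s)) {0..1} = inj_on (\<lambda>s. fst (\<gamma> s)) {0..1}"
    by (rule inj_on_cong) (simp add: fracM)
  ultimately have inj_frac: "inj_on (\<lambda>s. frac (M s)) {0..1}" by simp
  then have injM: "inj_on M {0..1}" by (rule inj_on_imageI2[of frac, unfolded comp_def])
  have "\<bar>M 1 - M 0\<bar> < 1" by (rule inj_frac_endpoint_dist_lt_1[OF M inj_frac])
  then have "fst w - 2 < M 1" "M 1 < fst w + 1" using M0 xu xw uw by (simp_all add: abs_less_iff)
  moreover have "frac (M 1) = fst w" using fracM[of 1] \<gamma>(6) by simp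
  ultimately have "M 1 = fst w \<or> M 1 = fst w - 1" by (intro frac_eq_cases)
  moreover have "M 1 \<noteq> fst w"
  proof
    assume "M 1 = fst w"
    obtain y0 where "(0, y0) \<in> edge_ri E u w" using edge_crosses_zero[OF u w neq] by blast
    then obtain s where "s \<in> {0..1}" "\<gamma> s = (0, y0)"
      unfolding edge_ri_def by (metis DiffD1 \<gamma>(4) imageE)
    then have "M s \<in> \<int>" using fracM[of s] by (simp add: frac_unique_iff)
    with continuous_inj_avoids_Ints[OF M injM] \<open>s \<in> {0..1}\<close> show False
      using M0 \<open>M 1 = fst w\<close> xu xw uw by simp
  qed
  ultimately have M1: "M 1 = fst w - 1" by simp
  have "M ` {0..1} = {M 1..M 0}"
    by (rule continuous_inj_image_unit_interval[OF M injM]) (use M0 M1 xu xw in linarith)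
  then have img: "M ` {0..1} = {fst w - 1..fst u}" using M0 M1 by simp
  have "continuous_on {0..1} (\<lambda>s. snd (\<gamma> s))"
    using continuous_on_snd[OF \<gamma>(2)] by (simp add: cyl_emb_def o_def)
  then have "\<exists>Y. continuous_on (M ` {0..1}) Y \<and> \<gamma> ` {0..1} = (\<lambda>t. (frac t, Y t)) ` M ` {0..1}"
    by (rule graph_of_frac_reparametrization[OF M injM]) (simp add: fracM)
  then show ?thesis unfolding img \<gamma>(4) .
qed

lemma edge_lift_graph:
  assumes u: "u \<in> V" and w: "w \<in> V" and uw: "fst u < fst w"
  shows "continuous_on {fst w - 1..fst u} (edge_lift E u w)"
    and "E u w = (\<lambda>t. (frac t, edge_lift E u w t)) ` {fst w - 1..fst u}"
proof -
  obtain Y where Y: "continuous_on {fst w - 1..fst u} Y" "E u w = (\<lambda>t. (frac t, Y t)) ` {fst w - 1..fst u}"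
    using edge_is_lifted_graph[OF u w uw] by blast
  have Y_eq: "edge_lift E u w t = Y t" if "t \<in> {fst w - 1..fst u}" for t
  proof -
    have "(frac t, Y t) \<in> E u w" using that unfolding Y(2) by blast
    moreover have "u \<noteq> w" using uw by auto
    ultimately show ?thesis unfolding edge_lift_def using yval_edge[OF u w] by blast
  qed
  have "continuous_on {fst w - 1..fst u} (edge_lift E u w) = continuous_on {fst w - 1..fst u} Y"
    by (rule continuous_on_cong) (simp_all add: Y_eq)
  with Y(1) show "continuous_on {fst w - 1..fst u} (edge_lift E u w)" by simp
  have "(\<lambda>t. (frac t, Y t)) ` {fst w - 1..fst u} = (\<lambda>t. (frac t, edge_lift E u w t)) ` {fst w - 1..fst u}"
    by (rule image_cong) (simp_all add: Y_eq)
  with Y(2) show "E u w = (\<lambda>t. (frac t, edge_lift E u w t)) ` {fst w - 1..fst u}"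
    by (rule trans)
qed

lemma edge_lift_in_edge:
  assumes "u \<in> V" "w \<in> V" "fst u < fst w" "t \<in> {fst w - 1..fst u}"
  shows "(frac t, edge_lift E u w t) \<in> E u w"
  using edge_lift_graph(2)[OF assms(1-3)] assms(4) by blast

lemma edge_lift_left:
  assumes "u \<in> V" "w \<in> V" "u \<noteq> w"
  shows "edge_lift E u w (fst u) = snd u"
  unfolding edge_lift_def frac_vertex_x[OF assms(1)]
  using yval_edge[OF assms] edge_endpoints(1)[OF assms] by simp

lemma edge_lift_right:
  assumes "u \<in> V" "w \<in> V" "u \<noteq> w"
  shows "edge_lift E u w (fst w - 1) = snd w"
  unfolding edge_lift_def frac_vertex_x_minus_1[OF assms(2)]
  using yval_edge[OF assms] edge_endpoints(2)[OF assms] by simp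

lemma edge_ri_lift_graph:
  assumes u: "u \<in> V" and w: "w \<in> V" and uw: "fst u < fst w"
  shows "edge_ri E u w = (\<lambda>t. (frac t, edge_lift E u w t)) ` {fst w - 1<..<fst u}"
proof (intro equalityI subsetI)
  have neq: "u \<noteq> w" using uw by auto
  fix p assume "p \<in> edge_ri E u w"
  then have p: "p \<in> E u w" "p \<noteq> u" "p \<noteq> w" unfolding edge_ri_def by auto
  then obtain t where t: "t \<in> {fst w - 1..fst u}" "p = (frac t, edge_lift E u w t)"
    using edge_lift_graph(2)[OF u w uw] by blast
  have "t \<noteq> fst u" "t \<noteq> fst w - 1"
    using p(2,3) t(2) frac_vertex_x[OF u] frac_vertex_x_minus_1[OF w]
      edge_lift_left[OF u w neq] edge_lift_right[OF u w neq]
    by (auto simp: prod_eq_iff)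
  then show "p \<in> (\<lambda>t. (frac t, edge_lift E u w t)) ` {fst w - 1<..<fst u}" using t by auto
next
  have xu: "0 < fst u" and xw: "fst w < 1" using vertex_x_bounds u w by auto
  fix p assume "p \<in> (\<lambda>t. (frac t, edge_lift E u w t)) ` {fst w - 1<..<fst u}"
  then obtain t where t: "t \<in> {fst w - 1<..<fst u}" "p = (frac t, edge_lift E u w t)" by blast
  then have "p \<in> E u w" using edge_lift_in_edge[OF u w uw, of t] by simp
  moreover have "frac t \<noteq> fst u" "frac t \<noteq> fst w"
    using frac_eq_cases[of t "fst u"] frac_eq_cases[of t "fst w"] t(1) xu xw uw by auto
  then have "p \<noteq> u" "p \<noteq> w" using t(2) by (auto simp: prod_eq_iff)
  ultimately show "p \<in> edge_ri E u w" unfolding edge_ri_def by auto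
qed

lemma xproj_edge_ri:
  assumes "u \<in> V" "w \<in> V" "fst u < fst w"
  shows "xproj (edge_ri E u w) = {0..<fst u} \<union> {fst w<..<1}"
proof -
  have "xproj (edge_ri E u w) = frac ` {fst w - 1<..<fst u}"
    unfolding edge_ri_lift_graph[OF assms] xproj_def by auto
  also have "\<dots> = {0..<fst u} \<union> {fst w<..<1}"
    using vertex_x_bounds[OF assms(1)] vertex_x_bounds[OF assms(2)] assms(3)
    by (intro frac_image_shifted_interval) auto
  finally show ?thesis .
qed

lemma yval_edge_ri_lift:
  assumes "u \<in> V" "w \<in> V" "fst u < fst w" "t \<in> {fst w - 1<..<fst u}"
  shows "yval (edge_ri E u w) (frac t) = edge_lift E u w t"
proof -
  have "frac t \<in> xproj (edge_ri E u w)"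
    using assms(4) unfolding edge_ri_lift_graph[OF assms(1-3)] xproj_def by blast
  moreover have "u \<noteq> w" using assms(3) by auto
  ultimately show ?thesis unfolding edge_lift_def using yval_edge_ri assms(1,2) by simp
qed

lemma edge_points_differ_near_shared_vertex:
  assumes "p \<in> V" "q \<in> V" "r \<in> V" "p \<noteq> q" "p \<noteq> r" "q \<noteq> r"
    and "(frac t, y) \<in> E p q" "(frac t, y') \<in> E p r" "fst p - 1 < t" "t < fst p"
  shows "y \<noteq> y'"
proof
  assume "y = y'"
  then have "(frac t, y) = p" using adjacent_edges_meet_at_common_vertex assms(1-8) by blast
  then have "frac t = fst p" by auto
  then show False using frac_eq_cases[of t "fst p"] assms(9,10) by auto
qed

lemma edge_lift_avoids_vertex:
  assumes "u \<in> V" "w \<in> V" "z \<in> V" "z \<noteq> u" "z \<noteq> w" "fst u < fst w"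
    and "t \<in> {fst w - 1..fst u}" "frac t = fst z"
  shows "edge_lift E u w t \<noteq> snd z"
proof
  assume "edge_lift E u w t = snd z"
  then have "z \<in> E u w" using edge_lift_in_edge[OF assms(1,2,6,7)] assms(8) by simp
  moreover have "u \<noteq> w" using assms(6) by auto
  ultimately show False using vertex_notin_edge assms(1-5) by blast
qed

lemma disjoint_edge_lifts_meet_once:
  assumes V: "a \<in> V" "b \<in> V" "c \<in> V" "d \<in> V"
    and x: "fst a < fst b" "fst b < fst c" "fst c < fst d"
    and t: "t1 \<in> {fst d - 1<..<fst a}" "t2 \<in> {fst b<..<fst c}"
    and meet: "edge_lift E c d t1 = edge_lift E a b t1"
  shows "edge_lift E c d t2 \<noteq> edge_lift E a b (t2 - 1)"
proof
  assume meet': "edge_lift E c d t2 = edge_lift E a b (t2 - 1)"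
  have x01: "0 < fst a" "fst d < 1" using vertex_x_bounds V by auto
  have "(frac t1, edge_lift E a b t1) \<in> E a b" "(frac t1, edge_lift E c d t1) \<in> E c d"
    "(frac (t2 - 1), edge_lift E a b (t2 - 1)) \<in> E a b" "(frac t2, edge_lift E c d t2) \<in> E c d"
    using t V x x01 by - (rule edge_lift_in_edge; simp)+
  moreover have "frac t2 = frac (t2 - 1)" by (metis diff_add_cancel frac_1_eq)
  ultimately have "(frac t1, edge_lift E a b t1) \<in> E a b \<inter> E c d"
    "(frac (t2 - 1), edge_lift E a b (t2 - 1)) \<in> E a b \<inter> E c d"
    using meet meet' by simp_all
  moreover have "a \<noteq> b" "c \<noteq> d" "{a, b} \<noteq> {c, d}" using x by (auto simp: doubleton_eq_iff)
  ultimately have "frac t1 = frac (t2 - 1)" using edges_meet_at_most_once[OF V] by blast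
  then have "t1 = t2 - 1" by (rule frac_inj) (use t x in auto)
  then show False using t x by auto
qed

lemma edge_lifts_from_leftmost_ordered:
  assumes V: "a \<in> V" "b \<in> V" "c \<in> V" "d \<in> V"
    and x: "fst a < fst b" "fst b < fst c" "fst c < fst d" and \<sigma>: "\<sigma> \<noteq> 0"
    and c_side: "\<sigma> * edge_lift E a b (fst c - 1) < \<sigma> * snd c"
    and d_side: "\<sigma> * edge_lift E a b (fst d - 1) < \<sigma> * snd d"
  shows "\<forall>t\<in>{fst d - 1<..<fst a}. \<sigma> * edge_lift E a c t \<le> \<sigma> * edge_lift E a d t"
proof -
  let ?Y = "\<lambda>u w t. \<sigma> * edge_lift E u w t"
  have x01: "0 < fst a" "fst d < 1" using vertex_x_bounds V by auto
  have ne: "a \<noteq> b" "a \<noteq> c" "a \<noteq> d" "b \<noteq> c" "b \<noteq> d" "c \<noteq> d" using x by auto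
  have on_edge: "(frac t, edge_lift E u w t) \<in> E u w" "(frac t, edge_lift E u w t) \<in> E w u"
    if "u \<in> V" "w \<in> V" "fst u < fst w" "t \<in> {fst w - 1..fst u}" for u w t
    using edge_lift_in_edge[OF that] edge_sym[OF that(1,2)] that(3) by auto
  have cont: "continuous_on {fst w - 1..fst u} (?Y u w)" if "u \<in> V" "w \<in> V" "fst u < fst w" for u w
    by (intro continuous_intros edge_lift_graph(1)[OF that])
  have ends: "?Y u w (fst u) = \<sigma> * snd u" "?Y u w (fst w - 1) = \<sigma> * snd w"
    if "u \<in> V" "w \<in> V" "u \<noteq> w" for u w
    using edge_lift_left[OF that] edge_lift_right[OF that] by simp_all
  have ab_ac: "edge_lift E a b t \<noteq> edge_lift E a c t" if "t \<in> {fst c - 1<..<fst a}" for t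
    using that V x by (intro edge_points_differ_near_shared_vertex[of a b c t]) (auto intro: on_edge)
  have ac_ad: "edge_lift E a c t \<noteq> edge_lift E a d t" if "t \<in> {fst d - 1<..<fst a}" for t
    using that V x by (intro edge_points_differ_near_shared_vertex[of a c d t]) (auto intro: on_edge)
  have bc_ab: "edge_lift E b c t \<noteq> edge_lift E a b t" if "t \<in> {fst c - 1<..<fst a}" for t
    using that V x by (intro edge_points_differ_near_shared_vertex[of b c a t]) (auto intro: on_edge)
  have bc_ac: "edge_lift E b c t \<noteq> edge_lift E a c t" if "t \<in> {fst c - 1<..<fst a}" for t
    using that V x by (intro edge_points_differ_near_shared_vertex[of c b a t]) (auto intro: on_edge)
  have cd_bc: "edge_lift E c d t \<noteq> edge_lift E b c t" if "t \<in> {fst d - 1<..<fst b}" for t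
    using that V x by (intro edge_points_differ_near_shared_vertex[of c d b t]) (auto intro: on_edge)
  have cd_ac: "edge_lift E c d t \<noteq> edge_lift E a c t" if "t \<in> {fst d - 1<..<fst a}" for t
    using that V x by (intro edge_points_differ_near_shared_vertex[of c d a t]) (auto intro: on_edge)
  have d_off_ac: "edge_lift E a c (fst d - 1) \<noteq> snd d"
    using V x x01 by (intro edge_lift_avoids_vertex) (auto simp: frac_vertex_x_minus_1)
  have a_off_bc: "edge_lift E b c (fst a) \<noteq> snd a"
    using V x x01 by (intro edge_lift_avoids_vertex) (auto simp: frac_vertex_x)
  have b_off_cd: "edge_lift E c d (fst b) \<noteq> snd b"
    using V x x01 by (intro edge_lift_avoids_vertex) (auto simp: frac_vertex_x)
  have a_off_cd: "edge_lift E c d (fst a) \<noteq> snd a"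
    using V x x01 by (intro edge_lift_avoids_vertex) (auto simp: frac_vertex_x)
  have ab_cd: "\<not> (\<exists>t1\<in>{fst d - 1<..<fst a}. \<exists>t2\<in>{fst b<..<fst c}.
      edge_lift E c d t1 = edge_lift E a b t1 \<and> edge_lift E c d t2 = edge_lift E a b (t2 - 1))"
    using disjoint_edge_lifts_meet_once[OF V x] by blast
  have "fst a < fst c" "fst a < fst d" using x by auto
  from lifted_quadrilateral_order[OF x01(1) x x01(2)
      cont[OF V(1,2) x(1)] ends[OF V(1,2) ne(1)] cont[OF V(1,3) \<open>fst a < fst c\<close>] ends[OF V(1,3) ne(2)]
      cont[OF V(1,4) \<open>fst a < fst d\<close>] ends[OF V(1,4) ne(3)]
      cont[OF V(2,3) x(2)] ends(2,1)[OF V(2,3) ne(4)] cont[OF V(3,4) x(3)] ends(2,1)[OF V(3,4) ne(6)]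
      c_side d_side]
  show ?thesis
    using \<sigma> ab_ac ac_ad bc_ab bc_ac cd_bc cd_ac d_off_ac a_off_bc b_off_cd a_off_cd ab_cd by simp
qed

lemma edges_from_leftmost_ordered:
  assumes V: "a \<in> V" "b \<in> V" "c \<in> V" "d \<in> V"
    and x: "fst a < fst b" "fst a < fst c" "fst c < fst d" and \<sigma>: "\<sigma> \<noteq> 0"
    and c_side: "fst c \<in> xproj (edge_ri E a b)" "\<sigma> * yval (edge_ri E a b) (fst c) < \<sigma> * snd c"
    and d_side: "fst d \<in> xproj (edge_ri E a b)" "\<sigma> * yval (edge_ri E a b) (fst d) < \<sigma> * snd d"
  shows "\<forall>z \<in> xproj (edge_ri E a c) \<inter> xproj (edge_ri E a d).
           \<sigma> * yval (edge_ri E a c) z \<le> \<sigma> * yval (edge_ri E a d) z"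
proof
  have x01: "0 < fst a" "fst d < 1" using vertex_x_bounds V by auto
  have "fst a < fst d" using x by simp
  have "fst b < fst c" using c_side(1) x unfolding xproj_edge_ri[OF V(1,2) x(1)] by auto
  have yval_ab: "yval (edge_ri E a b) (fst z) = edge_lift E a b (fst z - 1)"
    if "z \<in> V" "fst b < fst z" for z
    using yval_edge_ri_lift[OF V(1,2) x(1), of "fst z - 1"] vertex_x_bounds[OF that(1)] that(2) x01
      frac_vertex_x_minus_1[OF that(1)] by simp
  have "\<forall>t\<in>{fst d - 1<..<fst a}. \<sigma> * edge_lift E a c t \<le> \<sigma> * edge_lift E a d t"
    using c_side(2) d_side(2) yval_ab[OF V(3)] yval_ab[OF V(4)] \<open>fst b < fst c\<close> x
    by (intro edge_lifts_from_leftmost_ordered[OF V x(1) \<open>fst b < fst c\<close> x(3) \<sigma>]) auto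
  moreover fix z assume z: "z \<in> xproj (edge_ri E a c) \<inter> xproj (edge_ri E a d)"
  define t where "t = (if z < fst a then z else z - 1)"
  have "t \<in> {fst d - 1<..<fst a}" "frac t = z"
    using z x x01 unfolding t_def xproj_edge_ri[OF V(1,3) x(2)] xproj_edge_ri[OF V(1,4) \<open>fst a < fst d\<close>]
    by (auto simp: frac_eq frac_unique_iff)
  moreover have "yval (edge_ri E a c) (frac t) = edge_lift E a c t"
    "yval (edge_ri E a d) (frac t) = edge_lift E a d t"
    using calculation(2) x by (auto intro!: yval_edge_ri_lift V)
  ultimately show "\<sigma> * yval (edge_ri E a c) z \<le> \<sigma> * yval (edge_ri E a d) z" by simp
qed

lemma curve_prec_adjacent_edges:
  assumes V: "a \<in> V" "c \<in> V" "d \<in> V" and ne: "a \<noteq> c" "a \<noteq> d" "c \<noteq> d"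
    and le: "\<forall>z \<in> xproj (edge_ri E a c) \<inter> xproj (edge_ri E a d).
               yval (edge_ri E a c) z \<le> yval (edge_ri E a d) z"
  shows "curve_prec (edge_ri E a c) (edge_ri E a d)"
proof -
  have "\<not> crosses (edge_ri E a c) (edge_ri E a d)"
  proof
    assume "crosses (edge_ri E a c) (edge_ri E a d)"
    then obtain p where p: "p \<in> edge_ri E a c" "p \<in> edge_ri E a d"
      unfolding crosses_def crosses_at_def by blast
    then have "p = a" using adjacent_edges_meet_at_common_vertex[OF V ne] unfolding edge_ri_def by blast
    with p show False unfolding edge_ri_def by blast
  qed
  moreover obtain y1 y2 where "(0, y1) \<in> edge_ri E a c" "(0, y2) \<in> edge_ri E a d"
    using edge_crosses_zero V ne by meson
  then have "0 \<in> xproj (edge_ri E a c) \<inter> xproj (edge_ri E a d)" unfolding xproj_def by auto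
  ultimately show ?thesis using le unfolding curve_prec_def curves_related_def by blast
qed

lemma curve_prec_edges_to_vertices_above:
  assumes "a \<in> V" "b \<in> V" "c \<in> V" "d \<in> V" "fst a < fst b" "fst a < fst c" "fst c < fst d"
    and "pt_above c (edge_ri E a b)" "pt_above d (edge_ri E a b)"
  shows "curve_prec (edge_ri E a c) (edge_ri E a d)"
  using assms edges_from_leftmost_ordered[OF assms(1-7), of 1]
  by (intro curve_prec_adjacent_edges) (auto simp: pt_above_def)

lemma curve_prec_edges_to_vertices_below:
  assumes "a \<in> V" "b \<in> V" "c \<in> V" "d \<in> V" "fst a < fst b" "fst a < fst c" "fst c < fst d"
    and "pt_below c (edge_ri E a b)" "pt_below d (edge_ri E a b)"
  shows "curve_prec (edge_ri E a d) (edge_ri E a c)"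
  using assms edges_from_leftmost_ordered[OF assms(1-7), of "-1"]
  by (intro curve_prec_adjacent_edges) (auto simp: pt_below_def)

end

theorem lemma13:
  fixes v :: "nat \<Rightarrow> pt" and n :: nat and E :: "pt \<Rightarrow> pt \<Rightarrow> pt set"
  assumes "n \<ge> 2"
    and "flag (v ` {1..n}) E"
    and "\<forall>i j. 1 \<le> i \<and> i < j \<and> j \<le> n \<longrightarrow> fst (v i) < fst (v j)"
  shows "(\<forall>i1 i2. 1 \<le> i1 \<and> i1 < i2 \<and> i2 \<le> n \<and>
            pt_above (v i1) (edge_ri E (v 1) (v 2)) \<and> pt_above (v i2) (edge_ri E (v 1) (v 2)) \<longrightarrow>
            curve_prec (edge_ri E (v 1) (v i1)) (edge_ri E (v 1) (v i2))) \<and>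
         (\<forall>i1 i2. 1 \<le> i1 \<and> i1 < i2 \<and> i2 \<le> n \<and>
            pt_below (v i1) (edge_ri E (v 1) (v 2)) \<and> pt_below (v i2) (edge_ri E (v 1) (v 2)) \<longrightarrow>
            curve_prec (edge_ri E (v 1) (v i2)) (edge_ri E (v 1) (v i1)))"
proof -
  interpret flag_drawing "v ` {1..n}" E by standard (fact assms(2))
  have ord: "\<And>i j. 1 \<le> i \<Longrightarrow> i < j \<Longrightarrow> j \<le> n \<Longrightarrow> fst (v i) < fst (v j)" using assms(3) by blast
  have V: "\<And>i. 1 \<le> i \<Longrightarrow> i \<le> n \<Longrightarrow> v i \<in> v ` {1..n}" by auto
  have x12: "fst (v 1) < fst (v 2)" using ord[of 1 2] assms(1) by simp
  have first_not_related: "fst (v 1) \<notin> xproj (edge_ri E (v 1) (v 2))"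
    using xproj_edge_ri[OF V V x12] x12 assms(1) by auto
  show ?thesis
  proof (intro conjI allI impI; elim conjE)
    fix i1 i2 assume i: "1 \<le> i1" "i1 < i2" "i2 \<le> n"
      and above: "pt_above (v i1) (edge_ri E (v 1) (v 2))" "pt_above (v i2) (edge_ri E (v 1) (v 2))"
    then have "i1 \<noteq> 1" using first_not_related unfolding pt_above_def by auto
    then show "curve_prec (edge_ri E (v 1) (v i1)) (edge_ri E (v 1) (v i2))"
      using curve_prec_edges_to_vertices_above[OF V V V V _ _ _ above] i assms(1) ord by auto
  next
    fix i1 i2 assume i: "1 \<le> i1" "i1 < i2" "i2 \<le> n"
      and below: "pt_below (v i1) (edge_ri E (v 1) (v 2))" "pt_below (v i2) (edge_ri E (v 1) (v 2))"
    then have "i1 \<noteq> 1" using first_not_related unfolding pt_below_def by auto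
    then show "curve_prec (edge_ri E (v 1) (v i2)) (edge_ri E (v 1) (v i1))"
      using curve_prec_edges_to_vertices_below[OF V V V V _ _ _ below] i assms(1) ord by auto
  qed
qed

end
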